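(* Let $\ell^1$ be the Banach space of complex sequences $a=(a(n))_{n\ge1}$ with $\|a\|=\sum_n|a(n)|<\infty$, equipped with the product $(a*b)(1)=a(1)b(1)$ and $(a*b)(n)=a(1)b(n)+b(1)a(n)+a(n)b(n)$ for $n>1$. Its character space is $\{\phi_1\}\cup\{\phi_1+\phi_n:n>1\}$ where $\phi_n(a)=a(n)$. Then $\ell^1$ is neither left $\phi_1$-amenable nor $\phi_1$-biflat, but $\ell^1$ is approximately left character biprojective.
   Context: For a Banach algebra $A$ and character $\phi$: $A$ is left $\phi$-amenable if there is a bounded net $(a_\alpha)$ in $A$ with $\|aa_\alpha-\phi(a)a_\alpha\|\to0$ for all $a$ and $\phi(a_\alpha)\to1$. $A\otimes_pA$ is the projective tensor product with $a\cdot(b\otimes c)=ab\otimes c$, $(b\otimes c)\cdot a=b\otimes ca$, $\pi_A(a\otimes b)=ab$; $\tilde\phi(F)=F(\phi)$ for $F\in A^{**}$. $A$ is $\phi$-biflat if there is a bounded $A$-bimodule morphism $\rho:A\to(A\otimes_pA)^{**}$ with $\tilde\phi(\pi_A^{**}(\rho(a)))=\phi(a)$ for all $a$. $A$ is approximately left $\phi$-biprojective if there is a net $(\rho_\alpha)$ of bounded linear maps $A\to A\otimes_pA$ such that for all $a,x\in A$: $\|a\cdot\rho_\alpha(x)-\rho_\alpha(ax)\|\to0$, $\|\rho_\alpha(xa)-\phi(a)\rho_\alpha(x)\|\to0$, $\phi(\pi_A(\rho_\alpha(x)))-\phi(x)\to0$; approximately left character biprojective means this holds for every character. *)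

theory Defs
  imports "HOL-Analysis.Analysis"
begin

type_synonym seq = "nat \<Rightarrow> complex"
type_synonym seq2 = "nat \<times> nat \<Rightarrow> complex"

text \<open>Elements of ell^1 are sequences indexed by n >= 1; we use functions on nat
  whose value at 0 is 0 (index 0 is unused).\<close>
definition L1 :: "seq set" where
  "L1 = {a. a 0 = 0 \<and> summable (\<lambda>n. cmod (a n))}"

definition l1norm :: "seq \<Rightarrow> real" where
  "l1norm a = (\<Sum>n. cmod (a n))"

definition l1add :: "seq \<Rightarrow> seq \<Rightarrow> seq" where
  "l1add a b = (\<lambda>n. a n + b n)"

definition l1scale :: "complex \<Rightarrow> seq \<Rightarrow> seq" where
  "l1scale c a = (\<lambda>n. c * a n)"

definition l1mult :: "seq \<Rightarrow> seq \<Rightarrow> seq" where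
  "l1mult a b = (\<lambda>n. if n = 0 then 0
                       else if n = 1 then a 1 * b 1
                       else a 1 * b n + b 1 * a n + a n * b n)"

definition unitvec :: "nat \<Rightarrow> seq" where
  "unitvec i = (\<lambda>n. if n = i then 1 else 0)"

definition is_character :: "(seq \<Rightarrow> complex) \<Rightarrow> bool" where
  "is_character \<phi> \<longleftrightarrow>
     (\<forall>a\<in>L1. \<forall>b\<in>L1. \<forall>c. \<phi> (l1add a (l1scale c b)) = \<phi> a + c * \<phi> b) \<and>
     (\<forall>a\<in>L1. \<forall>b\<in>L1. \<phi> (l1mult a b) = \<phi> a * \<phi> b) \<and>
     (\<exists>C. \<forall>a\<in>L1. cmod (\<phi> a) \<le> C * l1norm a) \<and>
     (\<exists>a\<in>L1. \<phi> a \<noteq> 0)"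

definition phi1 :: "seq \<Rightarrow> complex" where
  "phi1 a = a 1"

section \<open>The projective tensor product ell^1 (x)_p ell^1 = ell^1(N x N)\<close>

definition L1T :: "seq2 set" where
  "L1T = {u. (\<forall>i j. (i = 0 \<or> j = 0) \<longrightarrow> u (i, j) = 0) \<and> (\<lambda>p. cmod (u p)) summable_on UNIV}"

definition tnorm :: "seq2 \<Rightarrow> real" where
  "tnorm u = infsum (\<lambda>p. cmod (u p)) UNIV"

definition tadd :: "seq2 \<Rightarrow> seq2 \<Rightarrow> seq2" where
  "tadd u v = (\<lambda>p. u p + v p)"

definition tscale :: "complex \<Rightarrow> seq2 \<Rightarrow> seq2" where
  "tscale c u = (\<lambda>p. c * u p)"

definition elem_tensor :: "seq \<Rightarrow> seq \<Rightarrow> seq2" where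
  "elem_tensor a b = (\<lambda>(i, j). a i * b j)"

text \<open>Module actions a.(b (x) c) = ab (x) c and (b (x) c).a = b (x) ca, extended continuously.\<close>
definition lmod :: "seq \<Rightarrow> seq2 \<Rightarrow> seq2" where
  "lmod a u = (\<lambda>(i, j). l1mult a (\<lambda>k. u (k, j)) i)"

definition rmod :: "seq2 \<Rightarrow> seq \<Rightarrow> seq2" where
  "rmod u a = (\<lambda>(i, j). l1mult (\<lambda>k. u (i, k)) a j)"

text \<open>The product map pi(a (x) b) = ab, extended continuously.\<close>
definition piA :: "seq2 \<Rightarrow> seq" where
  "piA u = (\<lambda>n. infsum (\<lambda>(i, j). u (i, j) * l1mult (unitvec i) (unitvec j) n) UNIV)"

definition dualT :: "(seq2 \<Rightarrow> complex) set" where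
  "dualT = {f. (\<forall>u\<in>L1T. \<forall>v\<in>L1T. \<forall>c. f (tadd u (tscale c v)) = f u + c * f v) \<and>
               (\<exists>C. \<forall>u\<in>L1T. cmod (f u) \<le> C * tnorm u)}"

definition dnorm :: "(seq2 \<Rightarrow> complex) \<Rightarrow> real" where
  "dnorm f = Sup {cmod (f u) | u. u \<in> L1T \<and> tnorm u \<le> 1}"

definition dadd :: "(seq2 \<Rightarrow> complex) \<Rightarrow> (seq2 \<Rightarrow> complex) \<Rightarrow> (seq2 \<Rightarrow> complex)" where
  "dadd f g = (\<lambda>u. f u + g u)"

definition dscale :: "complex \<Rightarrow> (seq2 \<Rightarrow> complex) \<Rightarrow> (seq2 \<Rightarrow> complex)" where
  "dscale c f = (\<lambda>u. c * f u)"

definition bidualT :: "((seq2 \<Rightarrow> complex) \<Rightarrow> complex) set" where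
  "bidualT = {F. (\<forall>f\<in>dualT. \<forall>g\<in>dualT. \<forall>c. F (dadd f (dscale c g)) = F f + c * F g) \<and>
                 (\<exists>C. \<forall>f\<in>dualT. cmod (F f) \<le> C * dnorm f)}"

section \<open>Amenability-type notions (nets are represented by proper filters)\<close>

definition left_phi_amenable :: "(seq \<Rightarrow> complex) \<Rightarrow> bool" where
  "left_phi_amenable \<phi> \<longleftrightarrow>
     (\<exists>F :: seq filter. F \<noteq> bot \<and>
        (\<exists>C. eventually (\<lambda>x. x \<in> L1 \<and> l1norm x \<le> C) F) \<and>
        (\<forall>a\<in>L1. ((\<lambda>x. l1norm (\<lambda>n. l1mult a x n - \<phi> a * x n)) \<longlongrightarrow> 0) F) \<and>
        ((\<lambda>x. \<phi> x) \<longlongrightarrow> 1) F)"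

text \<open>phi-biflat: bounded bimodule morphism rho : A -> (A (x)_p A)** with
  phi~(pi**(rho a)) = phi a. Bidual module actions: (a.F)(f) = F(f.a), (f.a)(u) = f(a.u);
  (F.a)(f) = F(a.f), (a.f)(u) = f(u.a). pi**(F)(g) = F(g o pi), phi~(G) = G(phi).\<close>
definition phi_biflat :: "(seq \<Rightarrow> complex) \<Rightarrow> bool" where
  "phi_biflat \<phi> \<longleftrightarrow>
     (\<exists>\<rho> :: seq \<Rightarrow> (seq2 \<Rightarrow> complex) \<Rightarrow> complex.
        (\<forall>a\<in>L1. \<rho> a \<in> bidualT) \<and>
        (\<forall>a\<in>L1. \<forall>b\<in>L1. \<forall>c. \<forall>f\<in>dualT. \<rho> (l1add a (l1scale c b)) f = \<rho> a f + c * \<rho> b f) \<and>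
        (\<exists>C. \<forall>a\<in>L1. \<forall>f\<in>dualT. cmod (\<rho> a f) \<le> C * l1norm a * dnorm f) \<and>
        (\<forall>a\<in>L1. \<forall>b\<in>L1. \<forall>f\<in>dualT. \<rho> (l1mult a b) f = \<rho> b (\<lambda>u. f (lmod a u))) \<and>
        (\<forall>a\<in>L1. \<forall>b\<in>L1. \<forall>f\<in>dualT. \<rho> (l1mult a b) f = \<rho> a (\<lambda>u. f (rmod u b))) \<and>
        (\<forall>a\<in>L1. \<rho> a (\<lambda>u. \<phi> (piA u)) = \<phi> a))"

definition bounded_linear_to_T :: "(seq \<Rightarrow> seq2) \<Rightarrow> bool" where
  "bounded_linear_to_T r \<longleftrightarrow>
     (\<forall>a\<in>L1. r a \<in> L1T) \<and>
     (\<forall>a\<in>L1. \<forall>b\<in>L1. \<forall>c. r (l1add a (l1scale c b)) = tadd (r a) (tscale c (r b))) \<and>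
     (\<exists>C. \<forall>a\<in>L1. tnorm (r a) \<le> C * l1norm a)"

definition approx_left_phi_biprojective :: "(seq \<Rightarrow> complex) \<Rightarrow> bool" where
  "approx_left_phi_biprojective \<phi> \<longleftrightarrow>
     (\<exists>F :: (seq \<Rightarrow> seq2) filter. F \<noteq> bot \<and>
        eventually bounded_linear_to_T F \<and>
        (\<forall>a\<in>L1. \<forall>x\<in>L1.
           ((\<lambda>r. tnorm (\<lambda>p. lmod a (r x) p - r (l1mult a x) p)) \<longlongrightarrow> 0) F \<and>
           ((\<lambda>r. tnorm (\<lambda>p. r (l1mult x a) p - \<phi> a * r x p)) \<longlongrightarrow> 0) F \<and>
           ((\<lambda>r. \<phi> (piA (r x)) - \<phi> x) \<longlongrightarrow> 0) F))"

definition approx_left_character_biprojective :: bool where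
  "approx_left_character_biprojective \<longleftrightarrow>
     (\<forall>\<phi>. is_character \<phi> \<longrightarrow> approx_left_phi_biprojective \<phi>)"

end

theory Submission
  imports Defs
begin

text \<open>
  A character is determined by its values on the unit vectors e_k, which span a dense subspace;
  e_1 is the identity and the e_k with k >= 2 are mutually orthogonal idempotents, so at most one
  of them is not annihilated. Everything else follows from the identity e_k a = (a(1) + a(k)) e_k
  for k >= 2.

  A bounded net (x) with e_k x - phi1(e_k) x -> 0 and x(1) -> 1 would have x(k) -> -1 for every
  k >= 2, which no bounded subset of ell^1 allows. For a phi1-biflat rho, the functional
  m = rho(e_1) is 1 on u |-> u(1,1) = phi1(pi(u)); writing e_k = e_k e_1 = e_1 e_k, the left
  action turns rho(e_k) into m(u |-> u(1,1) + u(k,1)) and the right action into m(0) = 0, so m is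
  -1 on u |-> u(k,1). Hence m is -|S| on u |-> (sum of u(k,1) over k in S), a functional of norm at
  most 1, contradicting boundedness of rho.

  Approximate biprojectivity at phi1 is witnessed by rho_N(x) = x(1) (e_1 - e_2 - ... - e_(N+1)) (x)
  e_1, whose left defect at a is x(1) (tail of a beyond N+1) (x) e_1, and at phi1 + phi_n by the
  exact morphism x |-> (x(1) + x(n)) e_n (x) e_n.
\<close>

section \<open>The algebra ell^1\<close>

lemma suminf_tail_tendsto_zero:
  fixes f :: "nat \<Rightarrow> real"
  assumes "summable f"
  shows "(\<lambda>N. \<Sum>i. if N \<le> i then f i else 0) \<longlonglongrightarrow> 0"
proof -
  have "(\<lambda>i. if i \<in> {..<N} then 0 else f i) sums (suminf f - sum f {..<N})" for N
    by (rule sums_If_finite_set'[OF summable_sums[OF assms]]) (auto simp: sum_negf)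
  moreover have "(\<lambda>i. if N \<le> i then f i else 0) = (\<lambda>i. if i \<in> {..<N} then 0 else f i)" for N
    by auto
  ultimately have tail: "(\<Sum>i. if N \<le> i then f i else 0) = suminf f - sum f {..<N}" for N
    by (simp add: sums_iff)
  have "(\<lambda>N. suminf f - sum f {..<N}) \<longlonglongrightarrow> suminf f - suminf f"
    by (intro tendsto_diff tendsto_const summable_LIMSEQ assms)
  then show ?thesis
    by (simp add: tail)
qed

lemma infsum_if_eq: "infsum (\<lambda>p. if p = q then c else 0) UNIV = c"
proof -
  have "infsum (\<lambda>p. if p = q then c else 0) UNIV = infsum (\<lambda>p. if p = q then c else 0) {q}"
    by (rule infsum_cong_neutral) auto
  then show ?thesis
    by simp
qed

lemma L1_zero_at_0: "a \<in> L1 \<Longrightarrow> a 0 = 0"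
  by (simp add: L1_def)

lemma sum_le_l1norm:
  assumes "a \<in> L1" "finite S"
  shows "(\<Sum>n\<in>S. cmod (a n)) \<le> l1norm a"
  unfolding l1norm_def using assms by (intro sum_le_suminf) (auto simp: L1_def)

lemma norm_le_l1norm: "a \<in> L1 \<Longrightarrow> cmod (a n) \<le> l1norm a"
  using sum_le_l1norm[of a "{n}"] by simp

lemma l1norm_nonneg: "a \<in> L1 \<Longrightarrow> 0 \<le> l1norm a"
  using sum_le_l1norm[of a "{}"] by simp

lemma l1norm_l1scale: "a \<in> L1 \<Longrightarrow> l1norm (l1scale c a) = cmod c * l1norm a"
  unfolding l1norm_def l1scale_def norm_mult by (rule suminf_mult) (simp add: L1_def)

lemma l1add_l1scale_in_L1:
  assumes "a \<in> L1" "b \<in> L1"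
  shows "l1add a (l1scale c b) \<in> L1"
proof -
  have major: "summable (\<lambda>n. cmod (a n) + cmod c * cmod (b n))"
    using assms unfolding L1_def by (intro summable_add summable_mult) auto
  have bound: "cmod (a n + c * b n) \<le> cmod (a n) + cmod c * cmod (b n)" for n
    using norm_triangle_ineq[of "a n" "c * b n"] by (simp add: norm_mult)
  have "summable (\<lambda>n. cmod (a n + c * b n))"
    by (rule summable_comparison_test'[OF major]) (metis bound real_norm_def abs_norm_cancel)
  then show ?thesis
    using assms by (simp add: L1_def l1add_def l1scale_def)
qed

lemma l1scale_in_L1: "b \<in> L1 \<Longrightarrow> l1scale c b \<in> L1"
  using l1add_l1scale_in_L1[of "\<lambda>_. 0" b c] by (simp add: L1_def l1add_def)

lemma l1mult_in_L1:
  assumes "a \<in> L1" "b \<in> L1"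
  shows "l1mult a b \<in> L1"
proof -
  let ?g = "\<lambda>n. cmod (a 1) * cmod (b n) + (cmod (b 1) + l1norm b) * cmod (a n)"
  have major: "summable ?g"
    using assms unfolding L1_def by (intro summable_add summable_mult) auto
  have bound: "cmod (l1mult a b n) \<le> ?g n" for n
  proof -
    have "cmod (a n * b n) \<le> l1norm b * cmod (a n)"
      using norm_le_l1norm[OF assms(2), of n]
        by (simp add: norm_mult) (metis mult.commute mult_left_mono norm_ge_zero)
    moreover have "0 \<le> l1norm b * cmod (a n)"
      using l1norm_nonneg[OF assms(2)] by simp
    moreover have "cmod (a 1 * b n + b 1 * a n + a n * b n)
        \<le> cmod (a 1 * b n) + cmod (b 1 * a n) + cmod (a n * b n)"
      by (meson norm_triangle_ineq order_trans add_right_mono)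
    ultimately show ?thesis
      by (cases "n \<le> 1") (auto simp: l1mult_def norm_mult distrib_right le_Suc_eq)
  qed
  have "summable (\<lambda>n. cmod (l1mult a b n))"
    by (rule summable_comparison_test'[OF major]) (metis bound real_norm_def abs_norm_cancel)
  then show ?thesis
    by (simp add: L1_def l1mult_def)
qed

lemma unitvec_in_L1: "k \<noteq> 0 \<Longrightarrow> unitvec k \<in> L1"
  unfolding L1_def unitvec_def by (auto intro!: summable_finite[of "{k}"] split: if_splits)

lemma l1norm_l1scale_unitvec: "l1norm (l1scale c (unitvec k)) = cmod c"
proof -
  have "(\<Sum>n. cmod (c * unitvec k n)) = (\<Sum>n\<in>{k}. cmod (c * unitvec k n))"
    by (rule suminf_finite) (auto simp: unitvec_def)
  then show ?thesis
    by (simp add: l1norm_def l1scale_def unitvec_def)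
qed

lemma l1mult_commute: "l1mult a b = l1mult b a"
  by (auto simp: l1mult_def fun_eq_iff algebra_simps)

lemma l1mult_l1scale_right: "l1mult a (l1scale c b) = l1scale c (l1mult a b)"
  by (auto simp: l1mult_def l1scale_def fun_eq_iff algebra_simps)

lemma l1mult_unitvec_one: "a 0 = 0 \<Longrightarrow> l1mult a (unitvec 1) = a"
  by (auto simp: l1mult_def unitvec_def fun_eq_iff)

lemma l1mult_unitvec: "n \<ge> 2 \<Longrightarrow> l1mult a (unitvec n) = l1scale (a 1 + a n) (unitvec n)"
  by (auto simp: l1mult_def l1scale_def unitvec_def fun_eq_iff)

lemma unitvec_idempotent: "n \<ge> 2 \<Longrightarrow> l1mult (unitvec n) (unitvec n) = unitvec n"
  using l1mult_unitvec[of n "unitvec n"] by (auto simp: l1scale_def unitvec_def)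

lemma l1mult_at_1: "l1mult a b 1 = a 1 * b 1"
  by (simp add: l1mult_def)

lemma l1mult_at_1_plus_at: "n > 1 \<Longrightarrow> l1mult a b 1 + l1mult a b n = (a 1 + a n) * (b 1 + b n)"
  by (simp add: l1mult_def algebra_simps)

definition l1tail :: "nat \<Rightarrow> seq \<Rightarrow> seq" where
  "l1tail N a = (\<lambda>i. if N \<le> i then a i else 0)"

lemma l1tail_in_L1:
  assumes "a \<in> L1"
  shows "l1tail N a \<in> L1"
proof -
  have "summable (\<lambda>i. cmod (l1tail N a i))"
    by (rule summable_comparison_test'[where g = "\<lambda>i. cmod (a i)"])
      (use assms in \<open>auto simp: L1_def l1tail_def\<close>)
  then show ?thesis
    using assms by (simp add: L1_def l1tail_def)
qed

lemma l1norm_l1tail_tendsto_zero: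
  assumes "a \<in> L1"
  shows "(\<lambda>N. l1norm (l1tail N a)) \<longlonglongrightarrow> 0"
proof -
  have "l1norm (l1tail N a) = (\<Sum>i. if N \<le> i then cmod (a i) else 0)" for N
    unfolding l1norm_def l1tail_def by (rule suminf_cong) simp
  then show ?thesis
    using suminf_tail_tendsto_zero[of "\<lambda>i. cmod (a i)"] assms by (simp add: L1_def)
qed

lemma l1tail_Suc: "l1tail N a = l1add (l1tail (Suc N) a) (l1scale (a N) (unitvec N))"
  by (auto simp: l1tail_def l1add_def l1scale_def unitvec_def fun_eq_iff Suc_le_eq)

lemma l1tail_1: "a 0 = 0 \<Longrightarrow> l1tail 1 a = a"
  by (auto simp: l1tail_def fun_eq_iff not_less_eq_eq)

section \<open>Characters\<close>

lemma bounded_linear_functional_expansion: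
  assumes lin: "\<forall>a\<in>L1. \<forall>b\<in>L1. \<forall>c. \<phi> (l1add a (l1scale c b)) = \<phi> a + c * \<phi> b"
    and bnd: "\<forall>a\<in>L1. cmod (\<phi> a) \<le> C * l1norm a"
    and a: "a \<in> L1"
  shows "(\<lambda>N. \<Sum>k\<in>{1..<N}. a k * \<phi> (unitvec k)) \<longlonglongrightarrow> \<phi> a"
proof -
  have split: "\<phi> a = (\<Sum>k\<in>{1..<N}. a k * \<phi> (unitvec k)) + \<phi> (l1tail N a)" if "N \<ge> 1" for N
    using that
  proof (induction N rule: dec_induct)
    case base
    show ?case
      using l1tail_1[of a, OF L1_zero_at_0[OF a]] by simp
  next
    case (step N)
    have "\<phi> (l1tail N a) = \<phi> (l1tail (Suc N) a) + a N * \<phi> (unitvec N)"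
      using lin l1tail_in_L1[OF a] unitvec_in_L1[of N] step.hyps by (simp add: l1tail_Suc[of N a])
    with step.IH step.hyps show ?case
      by simp
  qed
  have "eventually (\<lambda>N. norm (\<phi> (l1tail N a)) \<le> C * l1norm (l1tail N a)) sequentially"
    using bnd l1tail_in_L1[OF a] by simp
  moreover have "(\<lambda>N. C * l1norm (l1tail N a)) \<longlonglongrightarrow> C * 0"
    by (intro tendsto_mult tendsto_const l1norm_l1tail_tendsto_zero a)
  ultimately have "(\<lambda>N. \<phi> (l1tail N a)) \<longlonglongrightarrow> 0"
    by (simp add: Lim_null_comparison)
  then have "(\<lambda>N. \<phi> a - \<phi> (l1tail N a)) \<longlonglongrightarrow> \<phi> a - 0"
    by (intro tendsto_diff tendsto_const)
  moreover have
    "eventually (\<lambda>N. \<phi> a - \<phi> (l1tail N a) = (\<Sum>k\<in>{1..<N}. a k * \<phi> (unitvec k))) sequentially"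
    using eventually_ge_at_top[of 1] by eventually_elim (simp add: split)
  ultimately show ?thesis
    by (simp add: Lim_transform_eventually)
qed

lemma character_zero: "is_character \<phi> \<Longrightarrow> \<phi> (\<lambda>_. 0) = 0"
proof -
  assume "is_character \<phi>"
  moreover have "(\<lambda>_. 0) \<in> L1" and "l1add (\<lambda>_. 0) (l1scale 1 (\<lambda>_. 0)) = (\<lambda>_. 0 :: complex)"
    by (simp_all add: L1_def l1add_def l1scale_def)
  ultimately have "\<phi> (\<lambda>_. 0) = \<phi> (\<lambda>_. 0) + \<phi> (\<lambda>_. 0)"
    unfolding is_character_def by (metis mult_1)
  then show ?thesis
    by simp
qed

lemma character_unitvec_one:
  assumes "is_character \<phi>"
  shows "\<phi> (unitvec 1) = 1"
proof -
  obtain a where a: "a \<in> L1" "\<phi> a \<noteq> 0"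
    using assms unfolding is_character_def by blast
  have "\<phi> a = \<phi> a * \<phi> (unitvec 1)"
    using assms a(1) unitvec_in_L1[of 1] l1mult_unitvec_one[of a, OF L1_zero_at_0[OF a(1)]]
    unfolding is_character_def by (metis one_neq_zero)
  then show ?thesis
    using a(2) by simp
qed

lemma character_unitvec_idempotent:
  assumes "is_character \<phi>" "k \<ge> 2"
  shows "\<phi> (unitvec k) = 0 \<or> \<phi> (unitvec k) = 1"
proof -
  have "\<phi> (unitvec k) = \<phi> (unitvec k) * \<phi> (unitvec k)"
    using assms unitvec_in_L1[of k] unitvec_idempotent[of k] unfolding is_character_def
    by (metis not_numeral_le_zero)
  then show ?thesis
    by (metis mult_cancel_right1 mult_eq_0_iff)
qed

lemma character_unitvec_orthogonal:
  assumes "is_character \<phi>" "k \<ge> 2" "m \<ge> 2" "k \<noteq> m"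
  shows "\<phi> (unitvec k) * \<phi> (unitvec m) = 0"
proof -
  have "l1mult (unitvec k) (unitvec m) = (\<lambda>_. 0)"
    using l1mult_unitvec[OF assms(3), of "unitvec k"] assms(2,4)
      by (auto simp: l1scale_def unitvec_def)
  moreover have "unitvec k \<in> L1" "unitvec m \<in> L1"
    using assms(2,3) by (simp_all add: unitvec_in_L1)
  ultimately show ?thesis
    using assms(1) character_zero[OF assms(1)] unfolding is_character_def by metis
qed

lemma character_eq_of_partial_sums:
  assumes "is_character \<phi>" "a \<in> L1"
    and "\<And>N. N \<ge> N0 \<Longrightarrow> (\<Sum>k\<in>{1..<N}. a k * \<phi> (unitvec k)) = v"
  shows "\<phi> a = v"
proof -
  obtain C where "\<forall>a\<in>L1. cmod (\<phi> a) \<le> C * l1norm a"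
    using assms(1) unfolding is_character_def by blast
  then have "(\<lambda>N. \<Sum>k\<in>{1..<N}. a k * \<phi> (unitvec k)) \<longlonglongrightarrow> \<phi> a"
    using assms(1,2) unfolding is_character_def
      by (intro bounded_linear_functional_expansion) blast+
  moreover have "(\<lambda>N. \<Sum>k\<in>{1..<N}. a k * \<phi> (unitvec k)) \<longlonglongrightarrow> v"
    by (rule tendsto_eventually) (use assms(3) in \<open>auto simp: eventually_at_top_linorder\<close>)
  ultimately show ?thesis
    using LIMSEQ_unique by blast
qed

lemma character_cases:
  assumes "is_character \<phi>"
  shows "(\<forall>a\<in>L1. \<phi> a = phi1 a) \<or> (\<exists>n>1. \<forall>a\<in>L1. \<phi> a = phi1 a + a n)"
proof -
  let ?c = "\<lambda>k. \<phi> (unitvec k)"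
  have c1: "?c 1 = 1"
    by (rule character_unitvec_one[OF assms])
  show ?thesis
  proof (cases "\<exists>n\<ge>2. ?c n \<noteq> 0")
    case True
    then obtain n where n: "n \<ge> 2" "?c n = 1"
      using character_unitvec_idempotent[OF assms] by blast
    have others: "?c k = 0" if "k \<ge> 2" "k \<noteq> n" for k
      using character_unitvec_orthogonal[OF assms that(1) n(1) that(2)] n(2) by simp
    have "\<phi> a = phi1 a + a n" if "a \<in> L1" for a
    proof (rule character_eq_of_partial_sums[OF assms that])
      fix N assume "N \<ge> Suc n"
      then have "(\<Sum>k\<in>{1..<N}. a k * ?c k) = (\<Sum>k\<in>{1, n}. a k * ?c k)"
        using n others by (intro sum.mono_neutral_right) auto
      then show "(\<Sum>k\<in>{1..<N}. a k * ?c k) = phi1 a + a n"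
        using n c1 by (simp add: phi1_def)
    qed
    moreover have "n > 1"
      using n(1) by simp
    ultimately show ?thesis
      by blast
  next
    case False
    have "\<phi> a = phi1 a" if "a \<in> L1" for a
    proof (rule character_eq_of_partial_sums[OF assms that])
      fix N :: nat assume "N \<ge> 2"
      then have "(\<Sum>k\<in>{1..<N}. a k * ?c k) = (\<Sum>k\<in>{1}. a k * ?c k)"
        using False by (intro sum.mono_neutral_right) auto
      then show "(\<Sum>k\<in>{1..<N}. a k * ?c k) = phi1 a"
        using c1 by (simp add: phi1_def)
    qed
    then show ?thesis
      by blast
  qed
qed

lemma is_character_cong:
  assumes "\<forall>a\<in>L1. \<phi> a = \<psi> a"
  shows "is_character \<phi> \<longleftrightarrow> is_character \<psi>"
  using assms unfolding is_character_def
    by (simp add: l1add_l1scale_in_L1 l1mult_in_L1 cong: ball_cong)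

lemma is_character_phi1: "is_character phi1"
  unfolding is_character_def
proof (intro conjI ballI allI)
  fix a b :: seq and c
  show "phi1 (l1add a (l1scale c b)) = phi1 a + c * phi1 b"
    by (simp add: phi1_def l1add_def l1scale_def)
  show "phi1 (l1mult a b) = phi1 a * phi1 b"
    unfolding phi1_def by (rule l1mult_at_1)
next
  show "\<exists>C. \<forall>a\<in>L1. cmod (phi1 a) \<le> C * l1norm a"
    by (intro exI[of _ 1]) (simp add: phi1_def norm_le_l1norm)
next
  show "\<exists>a\<in>L1. phi1 a \<noteq> 0"
    using unitvec_in_L1[of 1] by (intro bexI[of _ "unitvec 1"]) (auto simp: phi1_def unitvec_def)
qed

lemma is_character_phi1_plus_coord:
  assumes "n > 1"
  shows "is_character (\<lambda>a. phi1 a + a n)"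
  unfolding is_character_def
proof (intro conjI ballI allI)
  fix a b :: seq and c
  show "phi1 (l1add a (l1scale c b)) + l1add a (l1scale c b) n = phi1 a + a n + c * (phi1 b + b n)"
    by (simp add: phi1_def l1add_def l1scale_def algebra_simps)
  show "phi1 (l1mult a b) + l1mult a b n = (phi1 a + a n) * (phi1 b + b n)"
    using l1mult_at_1_plus_at[OF assms] by (simp add: phi1_def)
next
  show "\<exists>C. \<forall>a\<in>L1. cmod (phi1 a + a n) \<le> C * l1norm a"
  proof (intro exI[of _ 2] ballI)
    fix a assume a: "a \<in> L1"
    have "cmod (a 1 + a n) \<le> cmod (a 1) + cmod (a n)"
      by (rule norm_triangle_ineq)
    also have "\<dots> \<le> 2 * l1norm a"
      using norm_le_l1norm[OF a, of 1] norm_le_l1norm[OF a, of n] by simp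
    finally show "cmod (phi1 a + a n) \<le> 2 * l1norm a"
      by (simp add: phi1_def)
  qed
next
  show "\<exists>a\<in>L1. phi1 a + a n \<noteq> 0"
    using assms unitvec_in_L1[of 1]
      by (intro bexI[of _ "unitvec 1"]) (auto simp: phi1_def unitvec_def)
qed

lemma is_character_iff:
  "is_character \<phi> \<longleftrightarrow> (\<forall>a\<in>L1. \<phi> a = phi1 a) \<or> (\<exists>n>1. \<forall>a\<in>L1. \<phi> a = phi1 a + a n)"
proof
  show "is_character \<phi> \<Longrightarrow> (\<forall>a\<in>L1. \<phi> a = phi1 a) \<or> (\<exists>n>1. \<forall>a\<in>L1. \<phi> a = phi1 a + a n)"
    by (rule character_cases)
next
  assume "(\<forall>a\<in>L1. \<phi> a = phi1 a) \<or> (\<exists>n>1. \<forall>a\<in>L1. \<phi> a = phi1 a + a n)"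
  then show "is_character \<phi>"
  proof (elim disjE exE conjE)
    assume "\<forall>a\<in>L1. \<phi> a = phi1 a"
    then show ?thesis
      using is_character_cong is_character_phi1 by blast
  next
    fix n assume "n > 1" "\<forall>a\<in>L1. \<phi> a = phi1 a + a n"
    then show ?thesis
      using is_character_cong[of \<phi> "\<lambda>a. phi1 a + a n"] is_character_phi1_plus_coord by blast
  qed
qed

section \<open>The projective tensor product\<close>

lemma sum_le_tnorm:
  assumes "u \<in> L1T" "finite T"
  shows "(\<Sum>p\<in>T. cmod (u p)) \<le> tnorm u"
proof -
  have "infsum (\<lambda>p. cmod (u p)) T \<le> infsum (\<lambda>p. cmod (u p)) UNIV"
    by (rule infsum_mono_neutral) (use assms in \<open>auto simp: L1T_def\<close>)
  then show ?thesis
    using assms(2) by (simp add: tnorm_def)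
qed

lemma tnorm_zero: "tnorm (\<lambda>_. 0) = 0"
  by (simp add: tnorm_def)

lemma has_sum_norm_elem_tensor_unitvec:
  assumes "a \<in> L1"
  shows "((\<lambda>p. cmod (elem_tensor a (unitvec j) p)) has_sum l1norm a) UNIV"
proof -
  have "((\<lambda>i. cmod (a i)) has_sum l1norm a) UNIV"
    unfolding l1norm_def using assms
      by (intro sums_nonneg_imp_has_sum summable_sums) (auto simp: L1_def)
  moreover have "(\<lambda>p. cmod (elem_tensor a (unitvec j) p)) \<circ> (\<lambda>i. (i, j)) = (\<lambda>i. cmod (a i))"
    by (simp add: elem_tensor_def unitvec_def fun_eq_iff)
  ultimately have "((\<lambda>p. cmod (elem_tensor a (unitvec j) p)) has_sum l1norm a) (range (\<lambda>i. (i, j)))"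
    by (simp add: has_sum_reindex inj_on_def)
  then show ?thesis
    by (rule has_sum_cong_neutral[THEN iffD1, rotated -1]) (auto simp: elem_tensor_def unitvec_def)
qed

lemma elem_tensor_unitvec_in_L1T:
  assumes "a \<in> L1" "j \<noteq> 0"
  shows "elem_tensor a (unitvec j) \<in> L1T"
  using has_sum_imp_summable[OF has_sum_norm_elem_tensor_unitvec[OF assms(1)]] assms
  by (auto simp: L1T_def elem_tensor_def unitvec_def L1_def)

lemma tnorm_elem_tensor_unitvec: "a \<in> L1 \<Longrightarrow> tnorm (elem_tensor a (unitvec j)) = l1norm a"
  unfolding tnorm_def by (rule infsumI[OF has_sum_norm_elem_tensor_unitvec])

lemma lmod_elem_tensor: "lmod a (elem_tensor b c) = elem_tensor (l1mult a b) c"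
  by (auto simp: lmod_def elem_tensor_def l1mult_def fun_eq_iff algebra_simps)

lemma elem_tensor_diff:
  "(\<lambda>p. elem_tensor a c p - elem_tensor b c p) = elem_tensor (\<lambda>i. a i - b i) c"
  by (auto simp: elem_tensor_def fun_eq_iff algebra_simps)

lemma phi1_piA: "phi1 (piA u) = u (1, 1)"
proof -
  have "(\<lambda>(i, j). u (i, j) * l1mult (unitvec i) (unitvec j) 1)
      = (\<lambda>p. if p = (1, 1) then u (1, 1) else 0)"
    by (auto simp: fun_eq_iff l1mult_def unitvec_def)
  then show ?thesis
    by (simp add: phi1_def piA_def infsum_if_eq)
qed

lemma piA_elem_tensor_unitvec_1: "a 0 = 0 \<Longrightarrow> piA (elem_tensor a (unitvec 1)) = a"
proof (rule ext)
  fix n assume "a 0 = 0"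
  then have "(\<lambda>(i, j). elem_tensor a (unitvec 1) (i, j) * l1mult (unitvec i) (unitvec j) n)
      = (\<lambda>p. if p = (n, 1) then a n else 0)"
    by (auto simp: elem_tensor_def l1mult_def unitvec_def fun_eq_iff)
  then show "piA (elem_tensor a (unitvec 1)) n = a n"
    by (simp add: piA_def infsum_if_eq)
qed

lemma piA_elem_tensor_unitvecs:
  "piA (elem_tensor (l1scale c (unitvec i)) (unitvec j))
    = l1scale c (l1mult (unitvec i) (unitvec j))"
proof (rule ext)
  fix n
  have "(\<lambda>(k, l). elem_tensor (l1scale c (unitvec i)) (unitvec j) (k, l)
        * l1mult (unitvec k) (unitvec l) n)
      = (\<lambda>p. if p = (i, j) then c * l1mult (unitvec i) (unitvec j) n else 0)"
    by (auto simp: elem_tensor_def l1scale_def unitvec_def fun_eq_iff)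
  then show "piA (elem_tensor (l1scale c (unitvec i)) (unitvec j)) n
      = l1scale c (l1mult (unitvec i) (unitvec j)) n"
    by (simp add: piA_def infsum_if_eq l1scale_def)
qed

section \<open>Left phi1-amenability and phi1-biflatness fail\<close>

lemma l1norm_unitvec_defect:
  assumes "k \<ge> 2"
  shows "l1norm (\<lambda>n. l1mult (unitvec k) x n - phi1 (unitvec k) * x n) = cmod (x 1 + x k)"
proof -
  have "phi1 (unitvec k) = 0"
    using assms by (simp add: phi1_def unitvec_def)
  then have "(\<lambda>n. l1mult (unitvec k) x n - phi1 (unitvec k) * x n)
      = l1scale (x 1 + x k) (unitvec k)"
    using l1mult_unitvec[OF assms, of x] by (simp add: l1mult_commute)
  then show ?thesis
    by (simp add: l1norm_l1scale_unitvec)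
qed

lemma l1norm_ge_half_card:
  assumes "x \<in> L1" "finite S" "\<forall>k\<in>S. 1/2 \<le> cmod (x k)"
  shows "real (card S) / 2 \<le> l1norm x"
proof -
  have "real (card S) / 2 = (\<Sum>k\<in>S. 1/2)"
    by simp
  also have "\<dots> \<le> (\<Sum>k\<in>S. cmod (x k))"
    using assms(3) by (intro sum_mono) auto
  also have "\<dots> \<le> l1norm x"
    using assms(1,2) by (rule sum_le_l1norm)
  finally show ?thesis .
qed

lemma not_left_phi1_amenable: "\<not> left_phi_amenable phi1"
proof
  assume "left_phi_amenable phi1"
  then obtain F C where F: "F \<noteq> bot"
    and bounded: "eventually (\<lambda>x. x \<in> L1 \<and> l1norm x \<le> C) F"
    and approx: "\<forall>a\<in>L1. ((\<lambda>x. l1norm (\<lambda>n. l1mult a x n - phi1 a * x n)) \<longlongrightarrow> 0) F"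
    and normalized: "((\<lambda>x. x 1) \<longlongrightarrow> 1) F"
    unfolding left_phi_amenable_def phi1_def by blast
  have large: "eventually (\<lambda>x. 1/2 \<le> cmod (x k)) F" if k: "k \<ge> 2" for k
  proof -
    have "unitvec k \<in> L1"
      using k by (simp add: unitvec_in_L1)
    with approx have "((\<lambda>x. l1norm (\<lambda>n. l1mult (unitvec k) x n - phi1 (unitvec k) * x n)) \<longlongrightarrow> 0) F"
      by blast
    then have "((\<lambda>x. cmod (x 1 + x k)) \<longlongrightarrow> 0) F"
      unfolding l1norm_unitvec_defect[OF k] .
    then have "eventually (\<lambda>x. cmod (x 1 + x k) < 1/4) F"
      by (rule order_tendstoD(2)) simp
    moreover have "eventually (\<lambda>x. dist (x 1) 1 < 1/4) F"
      using tendstoD[OF normalized, of "1/4"] by simp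
    ultimately show ?thesis
    proof eventually_elim
      case (elim x)
      have "1 \<le> cmod (x 1 - 1) + cmod (x 1 + x k) + cmod (x k)"
        using norm_triangle_ineq4[of "x 1 + x k" "x k"] norm_triangle_ineq4[of "x 1" "x 1 - 1"]
          by simp
      with elim show ?case
        by (simp add: dist_norm)
    qed
  qed
  obtain K :: nat where K: "2 * C < real K"
    using reals_Archimedean2 by blast
  have "eventually (\<lambda>x. \<forall>k\<in>{2..<K+2}. 1/2 \<le> cmod (x k)) F"
    by (rule eventually_ball_finite) (use large in auto)
  with bounded have "eventually (\<lambda>x. False) F"
  proof eventually_elim
    case (elim x)
    then have "real K / 2 \<le> C"
      using l1norm_ge_half_card[of x "{2..<K+2}"] by simp
    with K show ?case
      by simp
  qed
  with F show False
    by (simp add: eventually_False)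
qed

definition coeff_sum_e1 :: "nat set \<Rightarrow> seq2 \<Rightarrow> complex" where
  "coeff_sum_e1 S = (\<lambda>u. \<Sum>k\<in>S. u (k, 1))"

lemma norm_coeff_sum_e1_le_tnorm:
  assumes "u \<in> L1T" "finite S"
  shows "cmod (coeff_sum_e1 S u) \<le> tnorm u"
proof -
  have "cmod (coeff_sum_e1 S u) \<le> (\<Sum>k\<in>S. cmod (u (k, 1)))"
    unfolding coeff_sum_e1_def by (rule norm_sum)
  also have "\<dots> = (\<Sum>p\<in>(\<lambda>k. (k, 1)) ` S. cmod (u p))"
    by (subst sum.reindex) (auto simp: inj_on_def)
  also have "\<dots> \<le> tnorm u"
    using assms by (intro sum_le_tnorm) auto
  finally show ?thesis .
qed

lemma coeff_sum_e1_in_dualT: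
  assumes "finite S"
  shows "coeff_sum_e1 S \<in> dualT"
  unfolding dualT_def
proof (intro CollectI conjI ballI allI)
  fix u v c
  show "coeff_sum_e1 S (tadd u (tscale c v)) = coeff_sum_e1 S u + c * coeff_sum_e1 S v"
    by (simp add: coeff_sum_e1_def tadd_def tscale_def sum.distrib sum_distrib_left)
  show "\<exists>C. \<forall>u\<in>L1T. cmod (coeff_sum_e1 S u) \<le> C * tnorm u"
    using norm_coeff_sum_e1_le_tnorm assms by (intro exI[of _ 1]) simp
qed

lemma dnorm_coeff_sum_e1:
  assumes "finite S"
  shows "0 \<le> dnorm (coeff_sum_e1 S)" "dnorm (coeff_sum_e1 S) \<le> 1"
proof -
  let ?A = "{cmod (coeff_sum_e1 S u) | u. u \<in> L1T \<and> tnorm u \<le> 1}"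
  have "(\<lambda>_. 0) \<in> L1T" "tnorm (\<lambda>_. 0) = 0" "coeff_sum_e1 S (\<lambda>_. 0) = 0"
    by (simp_all add: L1T_def tnorm_def coeff_sum_e1_def)
  then have zero: "0 \<in> ?A"
    by (metis (mono_tags, lifting) mem_Collect_eq norm_zero zero_le_one)
  have bound: "x \<le> 1" if "x \<in> ?A" for x
  proof -
    obtain u where "x = cmod (coeff_sum_e1 S u)" "u \<in> L1T" "tnorm u \<le> 1"
      using \<open>x \<in> ?A\<close> by blast
    then show ?thesis
      using norm_coeff_sum_e1_le_tnorm[OF _ assms, of u] by linarith
  qed
  have "0 \<le> Sup ?A"
    by (rule cSup_upper[OF zero bdd_aboveI[of _ 1]]) (rule bound)
  moreover have "Sup ?A \<le> 1"
    by (rule cSup_least[OF _ bound]) (use zero in blast)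
  ultimately show "0 \<le> dnorm (coeff_sum_e1 S)" "dnorm (coeff_sum_e1 S) \<le> 1"
    by (simp_all add: dnorm_def)
qed

lemma coeff_sum_e1_insert:
  "finite S \<Longrightarrow> k \<notin> S \<Longrightarrow>
    coeff_sum_e1 (insert k S) = dadd (coeff_sum_e1 S) (dscale 1 (coeff_sum_e1 {k}))"
  by (simp add: coeff_sum_e1_def dadd_def dscale_def fun_eq_iff add.commute)

lemma coeff_sum_e1_lmod_unitvec:
  "k \<ge> 2 \<Longrightarrow> coeff_sum_e1 {k} (lmod (unitvec k) u) = coeff_sum_e1 {1, k} u"
  by (simp add: coeff_sum_e1_def lmod_def l1mult_def unitvec_def)

lemma coeff_sum_e1_rmod_unitvec:
  "k \<ge> 2 \<Longrightarrow> coeff_sum_e1 {k} (rmod u (unitvec k)) = 0"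
  by (simp add: coeff_sum_e1_def rmod_def l1mult_def unitvec_def)

lemma bidualT_coeff_sum_e1_insert:
  assumes "F \<in> bidualT" "finite T" "k \<notin> T"
  shows "F (coeff_sum_e1 (insert k T)) = F (coeff_sum_e1 T) + F (coeff_sum_e1 {k})"
proof -
  have "coeff_sum_e1 T \<in> dualT" "coeff_sum_e1 {k} \<in> dualT"
    using assms(2) by (simp_all add: coeff_sum_e1_in_dualT)
  with assms(1) show ?thesis
    unfolding coeff_sum_e1_insert[OF assms(2,3)] bidualT_def by simp
qed

lemma bidualT_coeff_sum_e1:
  assumes "F \<in> bidualT" "finite S"
  shows "F (coeff_sum_e1 S) = (\<Sum>k\<in>S. F (coeff_sum_e1 {k}))"
  using assms(2)
proof (induction S rule: finite_induct)
  case empty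
  show ?case
    using bidualT_coeff_sum_e1_insert[OF assms(1), of "{}" 0] by simp
next
  case (insert k T)
  then show ?case
    using bidualT_coeff_sum_e1_insert[OF assms(1) insert.hyps] by simp
qed

lemma phi1_biflat_coeff_sum_unitvec:
  assumes bidual: "\<forall>a\<in>L1. \<rho> a \<in> bidualT"
    and left: "\<forall>a\<in>L1. \<forall>b\<in>L1. \<forall>f\<in>dualT. \<rho> (l1mult a b) f = \<rho> b (\<lambda>u. f (lmod a u))"
    and right: "\<forall>a\<in>L1. \<forall>b\<in>L1. \<forall>f\<in>dualT. \<rho> (l1mult a b) f = \<rho> a (\<lambda>u. f (rmod u b))"
    and diagonal: "\<forall>a\<in>L1. \<rho> a (\<lambda>u. phi1 (piA u)) = phi1 a"
    and k: "k \<ge> 2"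
  shows "\<rho> (unitvec 1) (coeff_sum_e1 {k}) = -1"
proof -
  let ?m = "\<rho> (unitvec 1)"
  have e1: "unitvec 1 \<in> L1" and ek: "unitvec k \<in> L1" and fk: "coeff_sum_e1 {k} \<in> dualT"
    using k by (simp_all add: unitvec_in_L1 coeff_sum_e1_in_dualT)
  have m: "?m \<in> bidualT"
    using bidual e1 by blast
  have one: "?m (coeff_sum_e1 {1}) = 1"
  proof -
    have "coeff_sum_e1 {1} = (\<lambda>u. phi1 (piA u))"
      by (simp add: coeff_sum_e1_def phi1_piA fun_eq_iff)
    then show ?thesis
      using diagonal e1 by (simp add: phi1_def unitvec_def)
  qed
  have ek_e1: "l1mult (unitvec k) (unitvec 1) = unitvec k"
    using k by (intro l1mult_unitvec_one) (simp add: unitvec_def)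
  then have e1_ek: "l1mult (unitvec 1) (unitvec k) = unitvec k"
    by (simp add: l1mult_commute)
  have "\<rho> (unitvec k) (coeff_sum_e1 {k}) = ?m (\<lambda>u. coeff_sum_e1 {k} (lmod (unitvec k) u))"
    using left[rule_format, OF ek e1 fk] unfolding ek_e1 .
  also have "(\<lambda>u. coeff_sum_e1 {k} (lmod (unitvec k) u)) = coeff_sum_e1 {1, k}"
    using coeff_sum_e1_lmod_unitvec[OF k] by (simp add: fun_eq_iff)
  finally have via_left:
      "\<rho> (unitvec k) (coeff_sum_e1 {k}) = ?m (coeff_sum_e1 {1}) + ?m (coeff_sum_e1 {k})"
    using bidualT_coeff_sum_e1[OF m, of "{1, k}"] k by simp
  have "\<rho> (unitvec k) (coeff_sum_e1 {k}) = ?m (\<lambda>u. coeff_sum_e1 {k} (rmod u (unitvec k)))"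
    using right[rule_format, OF e1 ek fk] unfolding e1_ek .
  also have "(\<lambda>u. coeff_sum_e1 {k} (rmod u (unitvec k))) = coeff_sum_e1 {}"
    using coeff_sum_e1_rmod_unitvec[OF k] by (simp add: fun_eq_iff coeff_sum_e1_def)
  finally have via_right: "\<rho> (unitvec k) (coeff_sum_e1 {k}) = 0"
    using bidualT_coeff_sum_e1[OF m, of "{}"] by simp
  from via_left via_right one show ?thesis
    by (simp add: add_eq_0_iff)
qed

lemma not_phi1_biflat: "\<not> phi_biflat phi1"
proof
  assume "phi_biflat phi1"
  then obtain \<rho> C where
    bidual: "\<forall>a\<in>L1. \<rho> a \<in> bidualT"
    and bounded: "\<forall>a\<in>L1. \<forall>f\<in>dualT. cmod (\<rho> a f) \<le> C * l1norm a * dnorm f"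
    and left: "\<forall>a\<in>L1. \<forall>b\<in>L1. \<forall>f\<in>dualT. \<rho> (l1mult a b) f = \<rho> b (\<lambda>u. f (lmod a u))"
    and right: "\<forall>a\<in>L1. \<forall>b\<in>L1. \<forall>f\<in>dualT. \<rho> (l1mult a b) f = \<rho> a (\<lambda>u. f (rmod u b))"
    and diagonal: "\<forall>a\<in>L1. \<rho> a (\<lambda>u. phi1 (piA u)) = phi1 a"
    unfolding phi_biflat_def by blast
  obtain K :: nat where K: "\<bar>C\<bar> < real K"
    using reals_Archimedean2 by blast
  let ?S = "{2..<K+2}"
  have "\<rho> (unitvec 1) (coeff_sum_e1 ?S) = (\<Sum>k\<in>?S. -1)"
    using bidualT_coeff_sum_e1[of "\<rho> (unitvec 1)" ?S] bidual unitvec_in_L1[of 1]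
      phi1_biflat_coeff_sum_unitvec[OF bidual left right diagonal] by simp
  then have "real K = cmod (\<rho> (unitvec 1) (coeff_sum_e1 ?S))"
    by simp
  also have "\<dots> \<le> C * l1norm (unitvec 1) * dnorm (coeff_sum_e1 ?S)"
    using bounded unitvec_in_L1[of 1] coeff_sum_e1_in_dualT[of ?S] by simp
  also have "\<dots> = C * dnorm (coeff_sum_e1 ?S)"
    using l1norm_l1scale_unitvec[of 1 1] by (simp add: l1scale_def)
  also have "\<dots> \<le> \<bar>C\<bar> * dnorm (coeff_sum_e1 ?S)"
    using dnorm_coeff_sum_e1(1)[of ?S] by (simp add: mult_right_mono)
  also have "\<dots> \<le> \<bar>C\<bar>"
    using dnorm_coeff_sum_e1(2)[of ?S] by (simp add: mult_left_le)
  finally show False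
    using K by simp
qed

section \<open>Approximate biprojectivity\<close>

lemma approx_left_phi_biprojective_sequentialI:
  assumes "\<And>N. bounded_linear_to_T (R N)"
    and "\<And>a x. a \<in> L1 \<Longrightarrow> x \<in> L1 \<Longrightarrow>
      (\<lambda>N. tnorm (\<lambda>p. lmod a (R N x) p - R N (l1mult a x) p)) \<longlonglongrightarrow> 0"
    and "\<And>a x. a \<in> L1 \<Longrightarrow> x \<in> L1 \<Longrightarrow>
      (\<lambda>N. tnorm (\<lambda>p. R N (l1mult x a) p - \<phi> a * R N x p)) \<longlonglongrightarrow> 0"
    and "\<And>x. x \<in> L1 \<Longrightarrow> (\<lambda>N. \<phi> (piA (R N x)) - \<phi> x) \<longlonglongrightarrow> 0"
  shows "approx_left_phi_biprojective \<phi>"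
  unfolding approx_left_phi_biprojective_def
  by (intro exI[of _ "filtermap R sequentially"])
    (simp add: filtermap_bot_iff eventually_filtermap filterlim_filtermap assms)

definition e1_minus_block :: "nat \<Rightarrow> seq" where
  "e1_minus_block N = (\<lambda>i. if i = 1 then 1 else if 2 \<le> i \<and> i < N + 2 then -1 else 0)"

definition phi1_rho :: "nat \<Rightarrow> seq \<Rightarrow> seq2" where
  "phi1_rho N x = elem_tensor (l1scale (x 1) (e1_minus_block N)) (unitvec 1)"

lemma e1_minus_block_in_L1: "e1_minus_block N \<in> L1"
  unfolding L1_def e1_minus_block_def
    by (auto intro!: summable_finite[of "{..<N+2}"] split: if_splits)

lemma l1mult_e1_minus_block:
  "a 0 = 0 \<Longrightarrow>
    l1mult a (e1_minus_block N) = l1add (l1scale (a 1) (e1_minus_block N)) (l1tail (N + 2) a)"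
  by (auto simp: l1mult_def e1_minus_block_def l1add_def l1scale_def l1tail_def fun_eq_iff)

lemma phi1_rho_bounded_linear: "bounded_linear_to_T (phi1_rho N)"
  unfolding bounded_linear_to_T_def
proof (intro conjI ballI allI)
  fix a :: seq assume "a \<in> L1"
  show "phi1_rho N a \<in> L1T"
    unfolding phi1_rho_def
      by (simp add: elem_tensor_unitvec_in_L1T l1scale_in_L1 e1_minus_block_in_L1)
next
  fix a b :: seq and c
  show "phi1_rho N (l1add a (l1scale c b)) = tadd (phi1_rho N a) (tscale c (phi1_rho N b))"
    by (auto simp: phi1_rho_def elem_tensor_def l1add_def l1scale_def tadd_def tscale_def fun_eq_iff
        algebra_simps)
next
  let ?w = "l1norm (e1_minus_block N)"
  show "\<exists>C. \<forall>a\<in>L1. tnorm (phi1_rho N a) \<le> C * l1norm a"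
  proof (intro exI[of _ ?w] ballI)
    fix a assume "a \<in> L1"
    have "cmod (a 1) * ?w \<le> l1norm a * ?w"
      using norm_le_l1norm[OF \<open>a \<in> L1\<close>] l1norm_nonneg[OF e1_minus_block_in_L1]
        by (rule mult_right_mono)
    then show "tnorm (phi1_rho N a) \<le> ?w * l1norm a"
      by (simp add: phi1_rho_def tnorm_elem_tensor_unitvec l1norm_l1scale e1_minus_block_in_L1
          l1scale_in_L1 mult.commute)
  qed
qed

lemma phi1_rho_left_defect:
  assumes "a \<in> L1"
  shows "(\<lambda>p. lmod a (phi1_rho N x) p - phi1_rho N (l1mult a x) p)
    = elem_tensor (l1scale (x 1) (l1tail (N + 2) a)) (unitvec 1)"
  unfolding phi1_rho_def lmod_elem_tensor elem_tensor_diff l1mult_l1scale_right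
    l1mult_e1_minus_block[of a, OF L1_zero_at_0[OF assms]] l1mult_at_1
  by (rule arg_cong[where f = "\<lambda>b. elem_tensor b (unitvec 1)"])
    (simp add: l1scale_def l1add_def fun_eq_iff algebra_simps)

lemma piA_phi1_rho: "piA (phi1_rho N x) = l1scale (x 1) (e1_minus_block N)"
  unfolding phi1_rho_def
    by (rule piA_elem_tensor_unitvec_1) (simp add: l1scale_def e1_minus_block_def)

lemma approx_left_phi_biprojective_phi1:
  assumes phi: "\<forall>a\<in>L1. \<phi> a = phi1 a"
  shows "approx_left_phi_biprojective \<phi>"
proof (rule approx_left_phi_biprojective_sequentialI[where R = phi1_rho])
  show "bounded_linear_to_T (phi1_rho N)" for N
    by (rule phi1_rho_bounded_linear)
next
  fix a x assume a: "a \<in> L1" and x: "x \<in> L1"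
  have "tnorm (\<lambda>p. lmod a (phi1_rho N x) p - phi1_rho N (l1mult a x) p)
      = cmod (x 1) * l1norm (l1tail (N + 2) a)" for N
    using a
      by (simp add: phi1_rho_left_defect tnorm_elem_tensor_unitvec l1norm_l1scale l1scale_in_L1
        l1tail_in_L1)
  moreover have "(\<lambda>N. cmod (x 1) * l1norm (l1tail (N + 2) a)) \<longlonglongrightarrow> cmod (x 1) * 0"
    using LIMSEQ_ignore_initial_segment[OF l1norm_l1tail_tendsto_zero[OF a], of 2]
    by (intro tendsto_mult tendsto_const) simp
  ultimately show "(\<lambda>N. tnorm (\<lambda>p. lmod a (phi1_rho N x) p - phi1_rho N (l1mult a x) p)) \<longlonglongrightarrow> 0"
    by simp
  have "(\<lambda>p. phi1_rho N (l1mult x a) p - \<phi> a * phi1_rho N x p) = (\<lambda>_. 0)" for N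
    using phi a by (auto simp: phi1_rho_def elem_tensor_def l1scale_def l1mult_def phi1_def)
  then show "(\<lambda>N. tnorm (\<lambda>p. phi1_rho N (l1mult x a) p - \<phi> a * phi1_rho N x p)) \<longlonglongrightarrow> 0"
    by (simp add: tnorm_zero)
next
  fix x assume x: "x \<in> L1"
  have "l1scale (x 1) (e1_minus_block N) \<in> L1" for N
    by (simp add: l1scale_in_L1 e1_minus_block_in_L1)
  then show "(\<lambda>N. \<phi> (piA (phi1_rho N x)) - \<phi> x) \<longlonglongrightarrow> 0"
    using phi x by (simp add: piA_phi1_rho phi1_def l1scale_def e1_minus_block_def)
qed

definition phin_rho :: "nat \<Rightarrow> seq \<Rightarrow> seq2" where
  "phin_rho n x = elem_tensor (l1scale (x 1 + x n) (unitvec n)) (unitvec n)"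

lemma phin_rho_bounded_linear:
  assumes "n \<noteq> 0"
  shows "bounded_linear_to_T (phin_rho n)"
  unfolding bounded_linear_to_T_def
proof (intro conjI ballI allI)
  fix a :: seq
  show "phin_rho n a \<in> L1T"
    using assms unfolding phin_rho_def
    by (simp add: elem_tensor_unitvec_in_L1T l1scale_in_L1 unitvec_in_L1)
next
  fix a b :: seq and c
  show "phin_rho n (l1add a (l1scale c b)) = tadd (phin_rho n a) (tscale c (phin_rho n b))"
    by (auto simp: phin_rho_def elem_tensor_def l1add_def l1scale_def tadd_def tscale_def fun_eq_iff
        algebra_simps)
next
  show "\<exists>C. \<forall>a\<in>L1. tnorm (phin_rho n a) \<le> C * l1norm a"
  proof (intro exI[of _ 2] ballI)
    fix a assume a: "a \<in> L1"
    have "tnorm (phin_rho n a) = cmod (a 1 + a n)"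
      using assms unfolding phin_rho_def
      by (simp add: tnorm_elem_tensor_unitvec l1scale_in_L1 unitvec_in_L1 l1norm_l1scale_unitvec)
    also have "\<dots> \<le> cmod (a 1) + cmod (a n)"
      by (rule norm_triangle_ineq)
    also have "\<dots> \<le> 2 * l1norm a"
      using norm_le_l1norm[OF a, of 1] norm_le_l1norm[OF a, of n] by simp
    finally show "tnorm (phin_rho n a) \<le> 2 * l1norm a" .
  qed
qed

lemma lmod_phin_rho:
  assumes "n > 1"
  shows "lmod a (phin_rho n x) = phin_rho n (l1mult a x)"
proof -
  have "n \<ge> 2"
    using assms by simp
  then show ?thesis
    using l1mult_at_1_plus_at[OF assms, of a x]
    by (simp add: phin_rho_def lmod_elem_tensor l1mult_l1scale_right l1mult_unitvec)
      (simp add: l1scale_def algebra_simps)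
qed

lemma piA_phin_rho: "n \<ge> 2 \<Longrightarrow> piA (phin_rho n x) = l1scale (x 1 + x n) (unitvec n)"
  by (simp add: phin_rho_def piA_elem_tensor_unitvecs unitvec_idempotent)

lemma approx_left_phi_biprojective_phi1_plus_coord:
  assumes n: "n > 1" and phi: "\<forall>a\<in>L1. \<phi> a = phi1 a + a n"
  shows "approx_left_phi_biprojective \<phi>"
proof (rule approx_left_phi_biprojective_sequentialI[where R = "\<lambda>_. phin_rho n"])
  show "bounded_linear_to_T (phin_rho n)"
    using n by (intro phin_rho_bounded_linear) simp
  fix a x assume a: "a \<in> L1" and x: "x \<in> L1"
  show "(\<lambda>N. tnorm (\<lambda>p. lmod a (phin_rho n x) p - phin_rho n (l1mult a x) p)) \<longlonglongrightarrow> 0"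
    by (simp add: lmod_phin_rho[OF n] tnorm_zero)
  have "phin_rho n (l1mult x a) p = \<phi> a * phin_rho n x p" for p
    using l1mult_at_1_plus_at[OF n, of x a] phi a
    by (simp add: phin_rho_def elem_tensor_def l1scale_def phi1_def split: prod.split)
  then show "(\<lambda>N. tnorm (\<lambda>p. phin_rho n (l1mult x a) p - \<phi> a * phin_rho n x p)) \<longlonglongrightarrow> 0"
    by (simp add: tnorm_zero)
next
  fix x assume x: "x \<in> L1"
  have n2: "n \<ge> 2"
    using n by simp
  then have "l1scale (x 1 + x n) (unitvec n) \<in> L1"
    by (simp add: l1scale_in_L1 unitvec_in_L1)
  then show "(\<lambda>N. \<phi> (piA (phin_rho n x)) - \<phi> x) \<longlonglongrightarrow> 0"
    using phi x n2 by (simp add: piA_phin_rho phi1_def l1scale_def unitvec_def)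
qed

lemma l1_approx_left_character_biprojective: "approx_left_character_biprojective"
  unfolding approx_left_character_biprojective_def
  using character_cases approx_left_phi_biprojective_phi1
    approx_left_phi_biprojective_phi1_plus_coord by blast

theorem mainTheorem19:
  shows "(\<forall>\<phi>. is_character \<phi> \<longleftrightarrow>
            ((\<forall>a\<in>L1. \<phi> a = phi1 a) \<or> (\<exists>n>1. \<forall>a\<in>L1. \<phi> a = phi1 a + a n))) \<and>
         \<not> left_phi_amenable phi1 \<and>
         \<not> phi_biflat phi1 \<and>
         approx_left_character_biprojective"
  using is_character_iff not_left_phi1_amenable not_phi1_biflat
    l1_approx_left_character_biprojective by blast

end
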